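(* Let $(X,Y,Z)$ be a random vector where $Y$ takes values in a countable set $\mathcal Y$ with $\mathbb P(Y\in\mathcal Y)=1$. Then $$0\le \mathrm{ETV}(X,Y,Z)\le 1 .$$ Moreover, when $\mathcal Y$ is finite, the upper bound $\mathrm{ETV}(X,Y,Z)=1$ is achieved when, conditional on $Z$, $X$ deterministically determines $Y$ (i.e. $Y$ is a measurable function of $(X,Z)$) and $\mathbb P(Y=y\mid Z)=1/|\mathcal Y|$ almost surely for all $y\in\mathcal Y$.
   Context: For distributions $\mathcal L_1,\mathcal L_2$ on the same space, $\mathrm{TV}(\mathcal L_1,\mathcal L_2)=\sup_A|\mathcal L_1(A)-\mathcal L_2(A)|$ (half the $L_1$ distance between densities/mass functions). The expected total variation is $$\mathrm{ETV}(X,Y,Z)=\frac{1}{1-1/|\mathcal Y|}\,\mathbb E\big[\mathrm{TV}\big(\mathcal L(Y\mid X,Z),\mathcal L(Y\mid Z)\big)\big],$$ where $|\mathcal Y|$ is the support size of $Y$; if $|\mathcal Y|=\infty$ the normalizing factor $\frac{1}{1-1/|\mathcal Y|}$ is replaced by $1$. Here $\mathcal L(\cdot\mid\cdot)$ denotes conditional distribution. *)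

theory Defs
  imports "HOL-Probability.Probability"
begin

definition gen_sigma :: "'a measure \<Rightarrow> ('a \<Rightarrow> 'b) \<Rightarrow> 'b measure \<Rightarrow> 'a measure" where
  "gen_sigma M W N = vimage_algebra (space M) W N"

definition cond_prob_pt :: "'a measure \<Rightarrow> 'a measure \<Rightarrow> ('a \<Rightarrow> 'y) \<Rightarrow> 'y \<Rightarrow> 'a \<Rightarrow> real" where
  "cond_prob_pt M F Y y = real_cond_exp M F (indicator {\<omega> \<in> space M. Y \<omega> = y})"

definition disc_support :: "'a measure \<Rightarrow> ('a \<Rightarrow> 'y) \<Rightarrow> 'y set" where
  "disc_support M Y = {y. measure M {\<omega> \<in> space M. Y \<omega> = y} > 0}"

definition tv_cond :: "'a measure \<Rightarrow> 'a measure \<Rightarrow> 'a measure \<Rightarrow> ('a \<Rightarrow> 'y) \<Rightarrow> 'a \<Rightarrow> real" where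
  "tv_cond M F G Y \<omega> = (1/2) * (\<Sum>\<^sub>\<infinity>y\<in>disc_support M Y.
       \<bar>cond_prob_pt M F Y y \<omega> - cond_prob_pt M G Y y \<omega>\<bar>)"

definition ETV :: "'a measure \<Rightarrow> ('a \<Rightarrow> 'x) \<Rightarrow> 'x measure \<Rightarrow> ('a \<Rightarrow> 'y)
                  \<Rightarrow> ('a \<Rightarrow> 'z) \<Rightarrow> 'z measure \<Rightarrow> real" where
  "ETV M X MX Y Z MZ =
     (if finite (disc_support M Y) then 1 / (1 - 1 / real (card (disc_support M Y))) else 1) *
     (\<integral>\<omega>. tv_cond M (gen_sigma M (\<lambda>\<omega>. (X \<omega>, Z \<omega>)) (MX \<Otimes>\<^sub>M MZ)) (gen_sigma M Z MZ) Y \<omega> \<partial>M)"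

end

theory Submission
  imports Defs
begin

text \<open>Write \<open>p\<^sub>y\<close> and \<open>q\<^sub>y\<close> for the conditional probabilities of \<open>{Y = y}\<close> given \<open>(X, Z)\<close>
  and given \<open>Z\<close>. Both are sub-probability vectors almost surely, so the total variation is at
  most \<open>1\<close>. If the support has \<open>k \<ge> 2\<close> points, then \<open>|p - q|/2 \<le> (p + q)/2 - p q\<close> on \<open>[0, 1]\<close>,
  and since \<open>Z\<close> is coarser than \<open>(X, Z)\<close> the tower property gives
  \<open>E[p\<^sub>y q\<^sub>y] = E[q\<^sub>y\<^sup>2] \<ge> 2 P(Y = y) / k - 1 / k\<^sup>2\<close>; summing over \<open>y\<close> yields
  \<open>E[TV] \<le> 1 - 1/k\<close>, which the normalising factor turns into \<open>ETV \<le> 1\<close>.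
  If \<open>Y\<close> is a function of \<open>(X, Z)\<close>, then \<open>p\<^sub>y\<close> is the indicator of \<open>{Y = y}\<close>, and with
  \<open>q\<^sub>y = 1/k\<close> the total variation equals \<open>1 - 1/k\<close> identically.\<close>

lemma subalgebra_gen_sigma:
  assumes "W \<in> measurable M N"
  shows "subalgebra M (gen_sigma M W N)"
  unfolding subalgebra_def gen_sigma_def using sets_image_in_sets[OF refl assms] by simp

lemma measurable_gen_sigma:
  assumes "W \<in> measurable M N"
  shows "W \<in> measurable (gen_sigma M W N) N"
  unfolding gen_sigma_def using assms by (intro measurable_vimage_algebra1) (auto dest: measurable_space)

lemma subalgebra_gen_sigma_comp:
  assumes "W \<in> measurable M N" and "f \<in> measurable N N'"
  shows "subalgebra (gen_sigma M W N) (gen_sigma M (\<lambda>\<omega>. f (W \<omega>)) N')"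
proof -
  have "(\<lambda>\<omega>. f (W \<omega>)) \<in> measurable (gen_sigma M W N) N'"
    using measurable_comp[OF measurable_gen_sigma[OF assms(1)] assms(2)] by (simp add: comp_def)
  from subalgebra_gen_sigma[OF this] show ?thesis by (simp add: gen_sigma_def)
qed

lemma gen_sigma_pair_subalgebras:
  assumes "X \<in> measurable M MX" and "Z \<in> measurable M MZ"
  shows "subalgebra M (gen_sigma M (\<lambda>\<omega>. (X \<omega>, Z \<omega>)) (MX \<Otimes>\<^sub>M MZ))"
    and "subalgebra (gen_sigma M (\<lambda>\<omega>. (X \<omega>, Z \<omega>)) (MX \<Otimes>\<^sub>M MZ)) (gen_sigma M Z MZ)"
proof -
  have XZ: "(\<lambda>\<omega>. (X \<omega>, Z \<omega>)) \<in> measurable M (MX \<Otimes>\<^sub>M MZ)" using assms by measurable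
  show "subalgebra M (gen_sigma M (\<lambda>\<omega>. (X \<omega>, Z \<omega>)) (MX \<Otimes>\<^sub>M MZ))"
    using XZ by (rule subalgebra_gen_sigma)
  show "subalgebra (gen_sigma M (\<lambda>\<omega>. (X \<omega>, Z \<omega>)) (MX \<Otimes>\<^sub>M MZ)) (gen_sigma M Z MZ)"
    using subalgebra_gen_sigma_comp[OF XZ measurable_snd] by simp
qed

lemma sum_indicator_fibers:
  assumes "finite S"
  shows "(\<Sum>y\<in>S. indicator {\<omega> \<in> A. Y \<omega> = y} \<omega> :: real) = indicator {\<omega> \<in> A. Y \<omega> \<in> S} \<omega>"
proof -
  have "(\<Sum>y\<in>S. indicator {\<omega> \<in> A. Y \<omega> = y} \<omega> :: real) =
      (\<Sum>y\<in>S. if y = Y \<omega> then indicator A \<omega> else 0)"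
    by (rule sum.cong) (auto simp: indicator_def)
  then show ?thesis using assms by (simp add: indicator_def)
qed

context finite_measure_subalgebra
begin

lemma integrable_cond_prob_pt:
  assumes "{\<omega> \<in> space M. Y \<omega> = y} \<in> sets M"
  shows "integrable M (cond_prob_pt M F Y y)"
  unfolding cond_prob_pt_def using assms by (intro real_cond_exp_int) (simp add: less_top[symmetric])

lemma integral_cond_prob_pt:
  assumes "{\<omega> \<in> space M. Y \<omega> = y} \<in> sets M"
  shows "(\<integral>\<omega>. cond_prob_pt M F Y y \<omega> \<partial>M) = measure M {\<omega> \<in> space M. Y \<omega> = y}"
  unfolding cond_prob_pt_def using assms
  by (subst real_cond_exp_int(2)) (simp_all add: less_top[symmetric] Int_absorb2)

lemma borel_measurable_cond_prob_pt [measurable]: "cond_prob_pt M F Y y \<in> borel_measurable M"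
  unfolding cond_prob_pt_def by simp

lemma AE_cond_prob_pt_bounds:
  assumes "{\<omega> \<in> space M. Y \<omega> = y} \<in> sets M"
  shows "AE \<omega> in M. 0 \<le> cond_prob_pt M F Y y \<omega> \<and> cond_prob_pt M F Y y \<omega> \<le> 1"
proof -
  have "AE \<omega> in M. 0 \<le> cond_prob_pt M F Y y \<omega>"
    unfolding cond_prob_pt_def using assms by (intro real_cond_exp_pos) auto
  moreover have "AE \<omega> in M. cond_prob_pt M F Y y \<omega> \<le> 1"
    unfolding cond_prob_pt_def using assms
    by (intro real_cond_exp_le_c) (auto simp: less_top[symmetric] indicator_def)
  ultimately show ?thesis by eventually_elim simp
qed

lemma AE_sum_cond_prob_pt_le_1:
  assumes "finite S" and events: "\<And>y. y \<in> S \<Longrightarrow> {\<omega> \<in> space M. Y \<omega> = y} \<in> sets M"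
  shows "AE \<omega> in M. (\<Sum>y\<in>S. cond_prob_pt M F Y y \<omega>) \<le> 1"
proof -
  \<comment> \<open>\<open>real_cond_exp_sum\<close> wants every summand integrable, also outside \<open>S\<close>.\<close>
  define f :: "_ \<Rightarrow> 'a \<Rightarrow> real"
    where "f y = (if y \<in> S then indicator {\<omega> \<in> space M. Y \<omega> = y} else (\<lambda>_. 0))" for y
  have f_int: "integrable M (f y)" for y
    using events by (simp add: f_def less_top[symmetric])
  have sum_eq: "(\<Sum>y\<in>S. real_cond_exp M F (f y) \<omega>) = (\<Sum>y\<in>S. cond_prob_pt M F Y y \<omega>)" for \<omega>
    by (rule sum.cong) (simp_all add: f_def cond_prob_pt_def)
  have "AE \<omega> in M. real_cond_exp M F (\<lambda>\<omega>. \<Sum>y\<in>S. f y \<omega>) \<omega> = (\<Sum>y\<in>S. real_cond_exp M F (f y) \<omega>)"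
    using f_int by (rule real_cond_exp_sum)
  moreover have "AE \<omega> in M. real_cond_exp M F (\<lambda>\<omega>. \<Sum>y\<in>S. f y \<omega>) \<omega> \<le> 1"
  proof (rule real_cond_exp_le_c)
    show "integrable M (\<lambda>\<omega>. \<Sum>y\<in>S. f y \<omega>)" using f_int by auto
    have "(\<Sum>y\<in>S. f y \<omega>) = indicator {\<omega> \<in> space M. Y \<omega> \<in> S} \<omega>" for \<omega>
      unfolding sum_indicator_fibers[OF \<open>finite S\<close>, symmetric] by (rule sum.cong) (simp_all add: f_def)
    then show "AE \<omega> in M. (\<Sum>y\<in>S. f y \<omega>) \<le> 1" by (simp add: indicator_def)
  qed
  ultimately show ?thesis by eventually_elim (simp add: sum_eq)
qed

lemma AE_cond_prob_pt_eq_indicator: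
  assumes "{\<omega> \<in> space M. Y \<omega> = y} \<in> sets M" and "{\<omega> \<in> space M. V \<omega> = y} \<in> sets F"
    and "AE \<omega> in M. Y \<omega> = V \<omega>"
  shows "AE \<omega> in M. cond_prob_pt M F Y y \<omega> = indicator {\<omega> \<in> space M. Y \<omega> = y} \<omega>"
proof -
  let ?I = "indicator {\<omega> \<in> space M. Y \<omega> = y} :: 'a \<Rightarrow> real"
  let ?J = "indicator {\<omega> \<in> space M. V \<omega> = y} :: 'a \<Rightarrow> real"
  have J_sets: "{\<omega> \<in> space M. V \<omega> = y} \<in> sets M"
    using assms(2) subalg by (auto simp: subalgebra_def)
  have IJ: "AE \<omega> in M. ?I \<omega> = ?J \<omega>"
    using assms(3) by eventually_elim (simp add: indicator_def)
  have "AE \<omega> in M. real_cond_exp M F ?I \<omega> = real_cond_exp M F ?J \<omega>"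
    using IJ by (rule real_cond_exp_cong) (use assms(1) J_sets in simp_all)
  moreover have "AE \<omega> in M. real_cond_exp M F ?J \<omega> = ?J \<omega>"
    using J_sets assms(2) by (intro real_cond_exp_F_meas) (simp_all add: less_top[symmetric])
  ultimately show ?thesis using IJ unfolding cond_prob_pt_def by eventually_elim simp
qed

text \<open>By the tower property both integrals equal \<open>E[q \<cdot> 1\<^bsub>{Y = y}\<^esub>]\<close>, as \<open>q\<close> is
  \<open>G\<close>- and hence \<open>F\<close>-measurable.\<close>

lemma cond_prob_pt_mult_coarser:
  assumes "subalgebra F G" and "{\<omega> \<in> space M. Y \<omega> = y} \<in> sets M"
  shows "integrable M (\<lambda>\<omega>. cond_prob_pt M F Y y \<omega> * cond_prob_pt M G Y y \<omega>)"
    and "integrable M (\<lambda>\<omega>. (cond_prob_pt M G Y y \<omega>)\<^sup>2)"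
    and "(\<integral>\<omega>. cond_prob_pt M F Y y \<omega> * cond_prob_pt M G Y y \<omega> \<partial>M) =
         (\<integral>\<omega>. (cond_prob_pt M G Y y \<omega>)\<^sup>2 \<partial>M)"
proof -
  interpret G: finite_measure_subalgebra M G
    using assms(1) subalg by unfold_locales (auto simp: subalgebra_def)
  let ?I = "indicator {\<omega> \<in> space M. Y \<omega> = y} :: 'a \<Rightarrow> real"
  let ?q = "cond_prob_pt M G Y y"
  have q_G: "?q \<in> borel_measurable G" unfolding cond_prob_pt_def by simp
  have q_F: "?q \<in> borel_measurable F" using assms(1) q_G by (rule measurable_from_subalg)
  have I_meas: "?I \<in> borel_measurable M" using assms(2) by simp
  have qI: "integrable M (\<lambda>\<omega>. ?q \<omega> * ?I \<omega>)"
    using G.integrable_cond_prob_pt[OF assms(2)]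
  proof (rule Bochner_Integration.integrable_bound)
    show "(\<lambda>\<omega>. ?q \<omega> * ?I \<omega>) \<in> borel_measurable M"
      by (intro borel_measurable_times G.borel_measurable_cond_prob_pt I_meas)
  qed (auto simp: indicator_def)
  note F_tower = real_cond_exp_intg[OF qI q_F I_meas, folded cond_prob_pt_def]
  note G_tower = G.real_cond_exp_intg[OF qI q_G I_meas, folded cond_prob_pt_def]
  show "integrable M (\<lambda>\<omega>. cond_prob_pt M F Y y \<omega> * ?q \<omega>)"
    using F_tower(1) by (simp add: mult.commute)
  show "integrable M (\<lambda>\<omega>. (?q \<omega>)\<^sup>2)"
    using G_tower(1) by (simp add: power2_eq_square)
  show "(\<integral>\<omega>. cond_prob_pt M F Y y \<omega> * ?q \<omega> \<partial>M) = (\<integral>\<omega>. (?q \<omega>)\<^sup>2 \<partial>M)"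
    using F_tower(2) G_tower(2) by (simp add: mult.commute power2_eq_square)
qed

end

lemma half_abs_diff_le:
  fixes a b :: real
  assumes "0 \<le> a" "a \<le> 1" "0 \<le> b" "b \<le> 1"
  shows "\<bar>a - b\<bar> / 2 \<le> (a + b) / 2 - a * b"
proof -
  have "a * b \<le> min a b" using assms by (simp add: mult_left_le mult_left_le_one_le)
  moreover have "\<bar>a - b\<bar> / 2 = (a + b) / 2 - min a b" by (simp add: abs_if min_def field_simps)
  ultimately show ?thesis by linarith
qed

lemma infsum_abs_diff_le_2:
  fixes f g :: "'a \<Rightarrow> real"
  assumes "\<And>y. y \<in> D \<Longrightarrow> 0 \<le> f y" and "\<And>y. y \<in> D \<Longrightarrow> 0 \<le> g y"
    and "\<And>S. finite S \<Longrightarrow> S \<subseteq> D \<Longrightarrow> sum f S \<le> 1"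
    and "\<And>S. finite S \<Longrightarrow> S \<subseteq> D \<Longrightarrow> sum g S \<le> 1"
  shows "(\<Sum>\<^sub>\<infinity>y\<in>D. \<bar>f y - g y\<bar>) \<le> 2"
proof (cases "(\<lambda>y. \<bar>f y - g y\<bar>) summable_on D")
  case True
  then show ?thesis
  proof (rule infsum_le_finite_sums)
    fix S assume S: "finite S" "S \<subseteq> D"
    have "(\<Sum>y\<in>S. \<bar>f y - g y\<bar>) \<le> (\<Sum>y\<in>S. f y + g y)"
      using S assms(1,2) by (intro sum_mono) (auto simp: abs_le_iff)
    also have "\<dots> = sum f S + sum g S" by (rule sum.distrib)
    also have "\<dots> \<le> 2" using assms(3,4)[OF S] by simp
    finally show "(\<Sum>y\<in>S. \<bar>f y - g y\<bar>) \<le> 2" .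
  qed
qed (simp add: infsum_not_exists)

lemma sum_abs_delta_minus_uniform:
  assumes "finite S" and "a \<in> S"
  shows "(\<Sum>y\<in>S. \<bar>(if y = a then 1 else 0) - 1 / real (card S)\<bar>) = 2 * (1 - 1 / real (card S))"
proof -
  let ?n = "real (card S)"
  have n: "1 \<le> card S" using assms by (auto simp: Suc_le_eq card_gt_0_iff)
  have "(\<Sum>y\<in>S - {a}. \<bar>(if y = a then 1 else 0) - 1 / ?n\<bar>) = (\<Sum>y\<in>S - {a}. 1 / ?n)"
    by (rule sum.cong) auto
  also have "\<dots> = (?n - 1) / ?n"
    using assms n by simp
  finally show ?thesis
    using n by (simp add: sum.remove[OF assms] diff_divide_distrib)
qed

lemma sets_disc_support_event:
  assumes "y \<in> disc_support M Y"
  shows "{\<omega> \<in> space M. Y \<omega> = y} \<in> sets M"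
  using assms measure_notin_sets unfolding disc_support_def by force

lemma tv_cond_nonneg: "0 \<le> tv_cond M F G Y \<omega>"
  unfolding tv_cond_def by (auto intro: infsum_nonneg)

lemma tv_cond_finite:
  assumes "finite (disc_support M Y)"
  shows "tv_cond M F G Y \<omega> =
    (\<Sum>y\<in>disc_support M Y. \<bar>cond_prob_pt M F Y y \<omega> - cond_prob_pt M G Y y \<omega>\<bar> / 2)"
  using assms unfolding tv_cond_def by (simp add: sum_divide_distrib)

lemma ETV_nonneg: "0 \<le> ETV M X MX Y Z MZ"
proof -
  have "0 \<le> 1 / (1 - 1 / real (card (disc_support M Y)))"
    by (cases "card (disc_support M Y)") auto
  then show ?thesis
    unfolding ETV_def by (intro mult_nonneg_nonneg integral_nonneg_AE) (simp_all add: tv_cond_nonneg)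
qed

context prob_space
begin

lemma disc_support_subset:
  assumes "prob {\<omega> \<in> space M. Y \<omega> \<in> A} = 1"
  shows "disc_support M Y \<subseteq> A"
proof
  fix y assume y: "y \<in> disc_support M Y"
  show "y \<in> A"
  proof (rule ccontr)
    assume "y \<notin> A"
    have A_sets: "{\<omega> \<in> space M. Y \<omega> \<in> A} \<in> sets M"
      using assms measure_notin_sets by force
    have "prob {\<omega> \<in> space M. Y \<omega> = y} \<le> prob (space M - {\<omega> \<in> space M. Y \<omega> \<in> A})"
      using \<open>y \<notin> A\<close> A_sets by (intro finite_measure_mono) auto
    also have "\<dots> = 0" using prob_compl[OF A_sets] assms by simp
    finally show False using y by (simp add: disc_support_def)
  qed
qed

lemma sum_prob_disc_support_le_1:
  assumes "finite S" and "S \<subseteq> disc_support M Y"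
  shows "(\<Sum>y\<in>S. prob {\<omega> \<in> space M. Y \<omega> = y}) \<le> 1"
proof -
  have "(\<Sum>y\<in>S. prob {\<omega> \<in> space M. Y \<omega> = y}) = prob (\<Union>y\<in>S. {\<omega> \<in> space M. Y \<omega> = y})"
    using assms sets_disc_support_event[of _ M Y]
    by (intro measure_finite_Union[symmetric]) (auto simp: disjoint_family_on_def)
  then show ?thesis by simp
qed

lemma AE_tv_cond_le_1:
  assumes "subalgebra M F" and "subalgebra M G" and "countable (disc_support M Y)"
  shows "AE \<omega> in M. tv_cond M F G Y \<omega> \<le> 1"
proof -
  interpret F: finite_measure_subalgebra M F using assms(1) by unfold_locales
  interpret G: finite_measure_subalgebra M G using assms(2) by unfold_locales
  let ?D = "disc_support M Y"
  let ?p = "\<lambda>y. cond_prob_pt M F Y y" and ?q = "\<lambda>y. cond_prob_pt M G Y y"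
  note events = sets_disc_support_event[of _ M Y]
  have "AE \<omega> in M. \<forall>S\<in>{S. finite S \<and> S \<subseteq> ?D}. (\<Sum>y\<in>S. ?p y \<omega>) \<le> 1 \<and> (\<Sum>y\<in>S. ?q y \<omega>) \<le> 1"
    using assms(3) events
    by (intro AE_ball_countable' countable_Collect_finite_subset eventually_conj
        F.AE_sum_cond_prob_pt_le_1 G.AE_sum_cond_prob_pt_le_1) auto
  moreover have "AE \<omega> in M. \<forall>y\<in>?D. 0 \<le> ?p y \<omega> \<and> 0 \<le> ?q y \<omega>"
  proof (rule AE_ball_countable'[OF _ assms(3)])
    fix y assume "y \<in> ?D"
    from F.AE_cond_prob_pt_bounds[OF events[OF this]] G.AE_cond_prob_pt_bounds[OF events[OF this]]
    show "AE \<omega> in M. 0 \<le> ?p y \<omega> \<and> 0 \<le> ?q y \<omega>" by eventually_elim simp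
  qed
  ultimately show ?thesis
  proof eventually_elim
    case (elim \<omega>)
    have "(\<Sum>\<^sub>\<infinity>y\<in>?D. \<bar>?p y \<omega> - ?q y \<omega>\<bar>) \<le> 2"
      by (rule infsum_abs_diff_le_2) (use elim in auto)
    then show ?case by (simp add: tv_cond_def)
  qed
qed

lemma cond_prob_pt_overlap_integral_le:
  fixes k :: real
  assumes "subalgebra M F" and "subalgebra F G" and "{\<omega> \<in> space M. Y \<omega> = y} \<in> sets M"
  defines "p \<equiv> cond_prob_pt M F Y y" and "q \<equiv> cond_prob_pt M G Y y"
  shows "integrable M (\<lambda>\<omega>. (p \<omega> + q \<omega>) / 2 - p \<omega> * q \<omega>)"
    and "(\<integral>\<omega>. (p \<omega> + q \<omega>) / 2 - p \<omega> * q \<omega> \<partial>M) \<le> (1 - 2 / k) * prob {\<omega> \<in> space M. Y \<omega> = y} + 1 / k\<^sup>2"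
proof -
  interpret F: finite_measure_subalgebra M F using assms(1) by unfold_locales
  interpret G: finite_measure_subalgebra M G
    using assms(1,2) by unfold_locales (auto simp: subalgebra_def)
  note tower = F.cond_prob_pt_mult_coarser[OF assms(2,3), folded p_def q_def]
  have p: "integrable M p" "(\<integral>\<omega>. p \<omega> \<partial>M) = prob {\<omega> \<in> space M. Y \<omega> = y}"
    unfolding p_def using assms(3) by (rule F.integrable_cond_prob_pt, rule F.integral_cond_prob_pt)
  have q: "integrable M q" "(\<integral>\<omega>. q \<omega> \<partial>M) = prob {\<omega> \<in> space M. Y \<omega> = y}"
    unfolding q_def using assms(3) by (rule G.integrable_cond_prob_pt, rule G.integral_cond_prob_pt)
  show "integrable M (\<lambda>\<omega>. (p \<omega> + q \<omega>) / 2 - p \<omega> * q \<omega>)"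
    using p(1) q(1) tower(1) by auto
  have "(\<integral>\<omega>. (p \<omega> + q \<omega>) / 2 - p \<omega> * q \<omega> \<partial>M) = prob {\<omega> \<in> space M. Y \<omega> = y} - (\<integral>\<omega>. (q \<omega>)\<^sup>2 \<partial>M)"
    using p q tower by simp
  moreover have "(\<integral>\<omega>. 2 / k * q \<omega> - 1 / k\<^sup>2 \<partial>M) \<le> (\<integral>\<omega>. (q \<omega>)\<^sup>2 \<partial>M)"
  proof (rule integral_mono)
    fix \<omega>
    have "(q \<omega>)\<^sup>2 - (2 / k * q \<omega> - 1 / k\<^sup>2) = (q \<omega> - 1 / k)\<^sup>2"
      by (simp add: power2_diff power_divide algebra_simps)
    then show "2 / k * q \<omega> - 1 / k\<^sup>2 \<le> (q \<omega>)\<^sup>2" by (smt (verit) zero_le_power2)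
  qed (use q(1) tower(2) in auto)
  moreover have "(\<integral>\<omega>. 2 / k * q \<omega> - 1 / k\<^sup>2 \<partial>M) = 2 / k * prob {\<omega> \<in> space M. Y \<omega> = y} - 1 / k\<^sup>2"
    using q by (simp add: prob_space)
  ultimately show "(\<integral>\<omega>. (p \<omega> + q \<omega>) / 2 - p \<omega> * q \<omega> \<partial>M) \<le> (1 - 2 / k) * prob {\<omega> \<in> space M. Y \<omega> = y} + 1 / k\<^sup>2"
    by (simp add: algebra_simps)
qed

lemma integral_tv_cond_le:
  assumes MF: "subalgebra M F" and FG: "subalgebra F G"
    and fin: "finite (disc_support M Y)" and two: "2 \<le> card (disc_support M Y)"
  shows "(\<integral>\<omega>. tv_cond M F G Y \<omega> \<partial>M) \<le> 1 - 1 / card (disc_support M Y)"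
proof -
  interpret F: finite_measure_subalgebra M F using MF by unfold_locales
  interpret G: finite_measure_subalgebra M G
    using MF FG by unfold_locales (auto simp: subalgebra_def)
  define D where "D = disc_support M Y"
  define k where "k = real (card D)"
  let ?p = "\<lambda>y. cond_prob_pt M F Y y" and ?q = "\<lambda>y. cond_prob_pt M G Y y"
  let ?P = "\<lambda>y. prob {\<omega> \<in> space M. Y \<omega> = y}"
  define h where "h \<omega> = (\<Sum>y\<in>D. (?p y \<omega> + ?q y \<omega>) / 2 - ?p y \<omega> * ?q y \<omega>)" for \<omega>
  have events: "{\<omega> \<in> space M. Y \<omega> = y} \<in> sets M" if "y \<in> D" for y
    using that unfolding D_def by (rule sets_disc_support_event)
  note overlap = cond_prob_pt_overlap_integral_le[OF MF FG events]
  have "AE \<omega> in M. \<forall>y\<in>D. (0 \<le> ?p y \<omega> \<and> ?p y \<omega> \<le> 1) \<and> (0 \<le> ?q y \<omega> \<and> ?q y \<omega> \<le> 1)"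
    using fin unfolding D_def
    by (intro AE_finite_allI eventually_conj F.AE_cond_prob_pt_bounds G.AE_cond_prob_pt_bounds
        sets_disc_support_event)
  then have tv_le_h: "AE \<omega> in M. tv_cond M F G Y \<omega> \<le> h \<omega>"
    by eventually_elim
      (auto simp: tv_cond_finite[OF fin] h_def D_def intro!: sum_mono half_abs_diff_le)
  have h_int: "integrable M h"
    unfolding h_def using overlap(1) by (rule Bochner_Integration.integrable_sum)
  have "(\<integral>\<omega>. tv_cond M F G Y \<omega> \<partial>M) \<le> (\<integral>\<omega>. h \<omega> \<partial>M)"
    using h_int tv_le_h by (rule integral_mono_AE')
      (use tv_le_h in \<open>eventually_elim, use tv_cond_nonneg in \<open>rule order_trans\<close>\<close>)
  also have "\<dots> = (\<Sum>y\<in>D. \<integral>\<omega>. (?p y \<omega> + ?q y \<omega>) / 2 - ?p y \<omega> * ?q y \<omega> \<partial>M)"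
    unfolding h_def using overlap(1) by (rule Bochner_Integration.integral_sum)
  also have "\<dots> \<le> (\<Sum>y\<in>D. (1 - 2 / k) * ?P y + 1 / k\<^sup>2)"
    using overlap(2) by (rule sum_mono)
  also have "\<dots> = (1 - 2 / k) * (\<Sum>y\<in>D. ?P y) + 1 / k"
    by (simp add: sum.distrib sum_distrib_left k_def power2_eq_square)
  also have "\<dots> \<le> (1 - 2 / k) * 1 + 1 / k"
    using two sum_prob_disc_support_le_1[OF fin subset_refl]
    by (intro add_right_mono mult_left_mono) (simp_all add: k_def D_def)
  finally show ?thesis by (simp add: k_def D_def)
qed

lemma ETV_le_1:
  assumes "X \<in> measurable M MX" and "Z \<in> measurable M MZ" and "countable (disc_support M Y)"
  shows "ETV M X MX Y Z MZ \<le> 1"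
proof -
  let ?F = "gen_sigma M (\<lambda>\<omega>. (X \<omega>, Z \<omega>)) (MX \<Otimes>\<^sub>M MZ)" and ?G = "gen_sigma M Z MZ"
  let ?D = "disc_support M Y"
  let ?I = "\<integral>\<omega>. tv_cond M ?F ?G Y \<omega> \<partial>M"
  note subalgs = gen_sigma_pair_subalgebras[OF assms(1,2)]
  have "AE \<omega> in M. tv_cond M ?F ?G Y \<omega> \<le> 1"
    using subalgs(1) subalgebra_gen_sigma[OF assms(2)] assms(3) by (rule AE_tv_cond_le_1)
  then have "?I \<le> (\<integral>\<omega>. 1 \<partial>M)" by (intro integral_mono_AE') auto
  then have I_le_1: "?I \<le> 1" by (simp add: prob_space)
  have ETV: "ETV M X MX Y Z MZ = (if finite ?D then 1 / (1 - 1 / card ?D) else 1) * ?I"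
    unfolding ETV_def ..
  show ?thesis
  proof (cases "finite ?D \<and> 2 \<le> card ?D")
    case True
    then have "?I \<le> 1 - 1 / card ?D"
      using subalgs by (intro integral_tv_cond_le) auto
    moreover have "0 < 1 - 1 / real (card ?D)" using True by simp
    ultimately show ?thesis using True by (simp add: ETV divide_le_eq)
  next
    case False
    \<comment> \<open>The normalising factor is then \<open>1\<close>, or \<open>0\<close> for a one-point support since \<open>x / 0 = 0\<close>.\<close>
    then have "(if finite ?D then 1 / (1 - 1 / card ?D) else 1) \<in> {0, 1 :: real}"
      by (auto simp: not_le less_2_cases_iff)
    then show ?thesis using I_le_1 by (auto simp: ETV)
  qed
qed

lemma ETV_eq_1_if_determined_uniform:
  assumes X: "X \<in> measurable M MX" and Y: "Y \<in> measurable M MY" and Z: "Z \<in> measurable M MZ"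
    and fin: "finite Ycal" and two: "2 \<le> card Ycal"
    and singletons: "\<And>y. y \<in> Ycal \<Longrightarrow> {y} \<in> sets MY"
    and full: "prob {\<omega> \<in> space M. Y \<omega> \<in> Ycal} = 1"
    and g: "g \<in> measurable (MX \<Otimes>\<^sub>M MZ) MY" and determined: "AE \<omega> in M. Y \<omega> = g (X \<omega>, Z \<omega>)"
    and uniform: "\<And>y. y \<in> Ycal \<Longrightarrow>
      AE \<omega> in M. cond_prob_pt M (gen_sigma M Z MZ) Y y \<omega> = 1 / card Ycal"
  shows "ETV M X MX Y Z MZ = 1"
proof -
  define F where "F = gen_sigma M (\<lambda>\<omega>. (X \<omega>, Z \<omega>)) (MX \<Otimes>\<^sub>M MZ)"
  define G where "G = gen_sigma M Z MZ"
  define n where "n = real (card Ycal)"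
  have XZ: "(\<lambda>\<omega>. (X \<omega>, Z \<omega>)) \<in> measurable M (MX \<Otimes>\<^sub>M MZ)" using X Z by measurable
  interpret F: finite_measure_subalgebra M F
    unfolding F_def using subalgebra_gen_sigma[OF XZ] by unfold_locales
  interpret G: finite_measure_subalgebra M G
    unfolding G_def using subalgebra_gen_sigma[OF Z] by unfold_locales
  have events: "{\<omega> \<in> space M. Y \<omega> = y} \<in> sets M" if "y \<in> Ycal" for y
    using measurable_sets[OF Y singletons[OF that]] by (simp add: vimage_def Int_def conj_commute)
  have support: "disc_support M Y = Ycal"
  proof
    show "disc_support M Y \<subseteq> Ycal" using full by (rule disc_support_subset)
    show "Ycal \<subseteq> disc_support M Y"
    proof
      fix y assume y: "y \<in> Ycal"
      have "prob {\<omega> \<in> space M. Y \<omega> = y} = (\<integral>\<omega>. cond_prob_pt M G Y y \<omega> \<partial>M)"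
        using G.integral_cond_prob_pt[OF events[OF y]] by simp
      also have "\<dots> = (\<integral>\<omega>. 1 / n \<partial>M)"
        using uniform[OF y] G.borel_measurable_cond_prob_pt
        by (intro integral_cong_AE) (simp_all add: G_def n_def)
      finally show "y \<in> disc_support M Y" using two by (simp add: disc_support_def n_def prob_space)
    qed
  qed
  have gXZ: "(\<lambda>\<omega>. g (X \<omega>, Z \<omega>)) \<in> measurable F MY"
    using measurable_comp[OF measurable_gen_sigma[OF XZ] g] by (simp add: F_def comp_def)
  have F_events: "{\<omega> \<in> space M. g (X \<omega>, Z \<omega>) = y} \<in> sets F" if "y \<in> Ycal" for y
    using measurable_sets[OF gXZ singletons[OF that]]
    by (simp add: F_def gen_sigma_def vimage_def Int_def conj_commute)
  have "AE \<omega> in M. \<omega> \<in> space M \<and> Y \<omega> \<in> Ycal \<and> (\<forall>y\<in>Ycal. cond_prob_pt M F Y y \<omega> =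
      indicator {\<omega> \<in> space M. Y \<omega> = y} \<omega> \<and> cond_prob_pt M G Y y \<omega> = 1 / n)"
    using AE_prob_1[OF full] AE_space
      F.AE_cond_prob_pt_eq_indicator[OF events F_events determined] uniform
    by (intro eventually_conj AE_finite_allI[OF fin]) (auto simp: G_def n_def)
  then have "AE \<omega> in M. tv_cond M F G Y \<omega> = 1 - 1 / n"
  proof eventually_elim
    case (elim \<omega>)
    then have "tv_cond M F G Y \<omega> = (\<Sum>y\<in>Ycal. \<bar>(if y = Y \<omega> then 1 else 0) - 1 / n\<bar>) / 2"
      by (auto simp: tv_cond_finite fin support sum_divide_distrib indicator_def intro!: sum.cong)
    moreover have "Y \<omega> \<in> Ycal" using elim by simp
    ultimately show ?case
      using sum_abs_delta_minus_uniform[OF fin] by (simp add: n_def)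
  qed
  then have "(\<integral>\<omega>. tv_cond M F G Y \<omega> \<partial>M) = (\<integral>\<omega>. 1 - 1 / n \<partial>M)"
    by (intro integral_cong_AE) (auto simp: tv_cond_finite fin support)
  also have "\<dots> = 1 - 1 / n" by (simp add: prob_space)
  finally show ?thesis
    using two by (simp add: ETV_def F_def G_def support fin n_def)
qed

end

theorem lemma1:
  fixes M :: "'a measure" and X :: "'a \<Rightarrow> 'x" and Y :: "'a \<Rightarrow> 'y" and Z :: "'a \<Rightarrow> 'z"
    and MX :: "'x measure" and MY :: "'y measure" and MZ :: "'z measure" and Ycal :: "'y set"
  assumes "prob_space M"
    and "X \<in> measurable M MX" and "Y \<in> measurable M MY" and "Z \<in> measurable M MZ"
    and "countable Ycal"
    and "\<And>y. y \<in> Ycal \<Longrightarrow> {y} \<in> sets MY"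
    and "measure M {\<omega> \<in> space M. Y \<omega> \<in> Ycal} = 1"
  shows "(0 \<le> ETV M X MX Y Z MZ \<and> ETV M X MX Y Z MZ \<le> 1) \<and>
        ((finite Ycal \<and> card Ycal \<ge> 2 \<and>
         (\<exists>g \<in> measurable (MX \<Otimes>\<^sub>M MZ) MY. AE \<omega> in M. Y \<omega> = g (X \<omega>, Z \<omega>)) \<and>
         (\<forall>y \<in> Ycal. AE \<omega> in M. cond_prob_pt M (gen_sigma M Z MZ) Y y \<omega> = 1 / real (card Ycal)))
         \<longrightarrow> ETV M X MX Y Z MZ = 1)"
proof -
  interpret prob_space M by fact
  have support: "disc_support M Y \<subseteq> Ycal" using assms(7) by (rule disc_support_subset)
  have "ETV M X MX Y Z MZ \<le> 1"
    using assms(2,4) countable_subset[OF support assms(5)] by (rule ETV_le_1)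
  moreover have "ETV M X MX Y Z MZ = 1"
    if "finite Ycal" and "card Ycal \<ge> 2"
      and "\<exists>g \<in> measurable (MX \<Otimes>\<^sub>M MZ) MY. AE \<omega> in M. Y \<omega> = g (X \<omega>, Z \<omega>)"
      and "\<forall>y \<in> Ycal. AE \<omega> in M. cond_prob_pt M (gen_sigma M Z MZ) Y y \<omega> = 1 / real (card Ycal)"
  proof -
    from that(3) obtain g where "g \<in> measurable (MX \<Otimes>\<^sub>M MZ) MY"
      and "AE \<omega> in M. Y \<omega> = g (X \<omega>, Z \<omega>)" by blast
    then show ?thesis
      using assms(2-4,6,7) that(1,2,4) by (intro ETV_eq_1_if_determined_uniform) auto
  qed
  ultimately show ?thesis using ETV_nonneg by blast
qed

end
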